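(* Let $d, n$ be integers with $n \ge 2d \ge 2$ and put $i := \lfloor n/d \rfloor$. Let $\mathcal{A}_n(d)$ be the set of $g \in S_n$ containing at least one $d$-cycle, and $\mathcal{A}_n^{+}(d)$, $\mathcal{A}_n^{-}(d)$ the subsets of its even, respectively odd, permutations. Let $a(\cdot)$ be defined by $a(0):=0$ and recursively $b(i,j) := \frac{1}{j!\,d^j}(1-a(i-j))$, $a(i) := \sum_{k=1}^i b(i,k)$. Then $$\left| \#\mathcal{A}_n^+(d) - \#\mathcal{A}_n^-(d)\right| \le n! \left( \frac{2n-d-1}{n(n-1)}(1-a(i-1)) + \frac{1}{n(n-1)}(1-a(i-2))\right) \le n! \cdot \frac{2}{n-1},$$ and $$\left| \frac{\#\mathcal{A}_n^+(d) - \#\mathcal{A}_n^-(d)}{\#\mathcal{A}_n(d)} \right| \le \frac{1}{n-1}\cdot \frac{2}{1 - \exp(-\frac{1}{d}) - \frac{2}{(i+1)!\, d^{i+1}}}.$$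
   Context: $S_n$ is the group of permutations of $\{1,\dots,n\}$. *)

theory Defs
  imports "HOL-Analysis.Analysis" "HOL-Combinatorics.Combinatorics"
begin

definition has_cycle_of_length :: "nat \<Rightarrow> nat \<Rightarrow> (nat \<Rightarrow> nat) \<Rightarrow> bool" where
  "has_cycle_of_length n d g \<longleftrightarrow> (\<exists>x\<in>{1..n}. card (orbit g x) = d)"

definition cycA :: "nat \<Rightarrow> nat \<Rightarrow> (nat \<Rightarrow> nat) set" where
  "cycA n d = {g. g permutes {1..n} \<and> has_cycle_of_length n d g}"

definition cycA_plus :: "nat \<Rightarrow> nat \<Rightarrow> (nat \<Rightarrow> nat) set" where
  "cycA_plus n d = {g \<in> cycA n d. evenperm g}"

definition cycA_minus :: "nat \<Rightarrow> nat \<Rightarrow> (nat \<Rightarrow> nat) set" where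
  "cycA_minus n d = {g \<in> cycA n d. \<not> evenperm g}"

function aseq :: "nat \<Rightarrow> nat \<Rightarrow> real" where
  "aseq d 0 = 0"
| "aseq d (Suc m) = (\<Sum>k\<in>{1..Suc m}. (1 / (fact k * real d ^ k)) * (1 - aseq d (Suc m - k)))"
  by pat_completeness auto
termination by (relation "Wellfounded.measure snd") auto

definition bseq :: "nat \<Rightarrow> nat \<Rightarrow> nat \<Rightarrow> real" where
  "bseq d i j = (1 / (fact j * real d ^ j)) * (1 - aseq d (i - j))"

lemma aseq_def_b: "aseq d i = (\<Sum>k\<in>{1..i}. bseq d i k)"
  by (cases i) (simp_all add: bseq_def)

end

theory Submission
  imports Defs
begin

text \<open>Let \<open>c(m)\<close> be the number of permutations of an \<open>m\<close>-set without a \<open>d\<close>-cycle, each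
  counted with weight \<open>1\<close> or with its sign, divided by \<open>m!\<close>. Splitting off the cycle through a
  fixed point gives the recursion \<open>m c(m) = \<Sum>\<close> over \<open>1 \<le> k \<le> m, k \<noteq> d\<close> of \<open>\<epsilon>(k) c(m - k)\<close>,
  with \<open>\<epsilon>(k) = 1\<close> or \<open>(-1)^(k-1)\<close>, solved by the coefficients of \<open>exp(-t^d/d)/(1 - t)\<close> and of
  \<open>(1 + t) exp((-1)^d t^d/d)\<close>. So the unweighted \<open>c(n)\<close> is the partial sum up to \<open>i = n div d\<close> of
  the series of \<open>exp(-1/d)\<close>, which is \<open>1 - a(i)\<close>, while the signed \<open>c(n)\<close> consists of at most
  two terms of size \<open>1/(i! d^i)\<close>. As the signs of all permutations sum to zero,
  \<open>#A\<^sup>+ - #A\<^sup>-\<close> is minus \<open>n!\<close> times the signed \<open>c(n)\<close>, and the estimates follow from the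
  alternating-series bounds on the partial sums of \<open>exp(-1/d)\<close>.\<close>

lemma funpow_eq_on_invariant:
  assumes "\<And>x. x \<in> T \<Longrightarrow> g x = p x" "\<And>x. x \<in> T \<Longrightarrow> p x \<in> T" "a \<in> T"
  shows "(g ^^ n) a = (p ^^ n) a \<and> (p ^^ n) a \<in> T"
  using assms by (induction n) auto

lemma cycle_of_list_funpow_nth:
  assumes "distinct cs" "j < length cs"
  shows "(cycle_of_list cs ^^ n) (cs ! j) = cs ! ((n + j) mod length cs)"
proof -
  have "(cycle_of_list cs ^^ n) (cs ! j) = map (cycle_of_list cs ^^ n) cs ! j"
    using assms by simp
  also have "\<dots> = rotate n cs ! j" using cyclic_rotation[OF assms(1)] by simp
  also have "\<dots> = cs ! ((n + j) mod length cs)" using assms by (simp add: nth_rotate)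
  finally show ?thesis .
qed

lemma orbit_cycle_of_list:
  assumes "distinct cs" "x \<in> set cs"
  shows "orbit (cycle_of_list cs) x = set cs"
proof -
  obtain j where j: "j < length cs" "x = cs ! j" using assms(2) by (metis in_set_conv_nth)
  have "orbit (cycle_of_list cs) x = {(cycle_of_list cs ^^ n) x | n. True}"
    by (rule orbit_altdef_permutation[OF permutation_of_cycle])
  also have "\<dots> = set cs"
  proof (intro set_eqI iffI)
    fix y assume "y \<in> {(cycle_of_list cs ^^ n) x | n. True}"
    then obtain n where "y = (cycle_of_list cs ^^ n) x" by auto
    then show "y \<in> set cs"
      using j assms cycle_of_list_funpow_nth by (metis mod_less_divisor nth_mem length_pos_if_in_set)
  next
    fix y assume "y \<in> set cs"
    then obtain k where k: "k < length cs" "y = cs ! k" by (metis in_set_conv_nth)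
    have "(cycle_of_list cs ^^ (k + length cs - j)) x = cs ! ((k + length cs - j + j) mod length cs)"
      using j assms cycle_of_list_funpow_nth by metis
    also have "(k + length cs - j + j) mod length cs = k" using k j by simp
    finally show "y \<in> {(cycle_of_list cs ^^ n) x | n. True}" using k by (metis (mono_tags) mem_Collect_eq)
  qed
  finally show ?thesis .
qed

lemma sign_cycle_of_list:
  assumes "distinct cs"
  shows "sign (cycle_of_list cs) = (-1) ^ (length cs - 1)"
  using assms
proof (induction cs rule: cycle_of_list.induct)
  case (1 i j cs)
  then have "i \<noteq> j" by auto
  have "sign (cycle_of_list (i # j # cs))
      = sign (Transposition.transpose i j) * sign (cycle_of_list (j # cs))"
    by (simp add: sign_compose permutation_of_cycle permutation_swap_id)
  also have "\<dots> = - ((-1) ^ (length (j # cs) - 1))" using 1 \<open>i \<noteq> j\<close> by (simp add: sign_swap_id)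
  finally show ?case by (simp add: comp_def)
qed simp_all

section \<open>Splitting off the cycle through a point\<close>

text \<open>A permutation of \<open>S\<close> is determined by the list \<open>[a, g a, g (g a), \<dots>]\<close> of its cycle
  through \<open>a\<close> together with its restriction to the complement of that cycle.\<close>

definition cycle_lists_at :: "'a set \<Rightarrow> 'a \<Rightarrow> 'a list set" where
  "cycle_lists_at S a = {cs. distinct cs \<and> set cs \<subseteq> S \<and> cs \<noteq> [] \<and> hd cs = a}"

definition cycle_list_of :: "('a \<Rightarrow> 'a) \<Rightarrow> 'a \<Rightarrow> 'a list" where
  "cycle_list_of g a = map (\<lambda>i. (g ^^ i) a) [0..<card (orbit g a)]"

lemma cycle_lists_at_eq_image_Cons:
  assumes "a \<in> S"
  shows "cycle_lists_at S a = (\<lambda>ys. a # ys) ` {ys. distinct ys \<and> set ys \<subseteq> S - {a}}"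
proof (intro set_eqI iffI)
  fix xs assume "xs \<in> cycle_lists_at S a"
  then obtain ys where "xs = a # ys" "distinct (a # ys)" "set (a # ys) \<subseteq> S"
    unfolding cycle_lists_at_def by (cases xs) auto
  then show "xs \<in> (\<lambda>ys. a # ys) ` {ys. distinct ys \<and> set ys \<subseteq> S - {a}}" by auto
qed (use assms in \<open>auto simp: cycle_lists_at_def\<close>)

lemma finite_cycle_lists_at: "finite S \<Longrightarrow> finite (cycle_lists_at S a)"
  by (rule finite_subset[OF _ finite_subset_distinct]) (auto simp: cycle_lists_at_def)

lemma cycle_comp_apply_in:
  assumes "h permutes (S - set cs)" "x \<in> set cs"
  shows "(cycle_of_list cs \<circ> h) x = cycle_of_list cs x"
  using assms by (simp add: permutes_not_in)

lemma cycle_comp_apply_out: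
  assumes "h permutes (S - set cs)" "x \<notin> set cs"
  shows "(cycle_of_list cs \<circ> h) x = h x" and "h x \<notin> set cs"
proof -
  show "h x \<notin> set cs"
    using assms permutes_in_image[OF assms(1)] permutes_not_in[OF assms(1)] by (cases "x \<in> S") auto
  then show "(cycle_of_list cs \<circ> h) x = h x" by (simp add: id_outside_supp)
qed

lemma cycle_comp_permutes:
  assumes "set cs \<subseteq> S" "h permutes (S - set cs)"
  shows "(cycle_of_list cs \<circ> h) permutes S"
  using cycle_permutes permutes_subset[OF _ assms(1)] permutes_subset[OF assms(2)]
  by (blast intro: permutes_compose)

lemma orbit_cycle_comp_in:
  assumes "distinct cs" "h permutes (S - set cs)" "x \<in> set cs"
  shows "orbit (cycle_of_list cs \<circ> h) x = set cs"
proof -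
  have "orbit (cycle_of_list cs \<circ> h) x = orbit (cycle_of_list cs) x"
  proof (rule orbit_cong0[where A = "set cs"])
    show "cycle_of_list cs \<circ> h \<in> set cs \<rightarrow> set cs"
      using permutes_in_image[OF cycle_permutes[of cs]] cycle_comp_apply_in[OF assms(2)] by auto
  qed (use assms cycle_comp_apply_in in auto)
  then show ?thesis using orbit_cycle_of_list assms by metis
qed

lemma orbit_cycle_comp_out:
  assumes "h permutes (S - set cs)" "x \<in> S - set cs"
  shows "orbit (cycle_of_list cs \<circ> h) x = orbit h x"
proof (rule orbit_cong0[where A = "S - set cs"])
  show "cycle_of_list cs \<circ> h \<in> S - set cs \<rightarrow> S - set cs"
    using permutes_in_image[OF assms(1)] cycle_comp_apply_out(1)[OF assms(1)] by auto
qed (use assms cycle_comp_apply_out in auto)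

lemma cycle_list_of_cycle_comp:
  assumes "cs \<in> cycle_lists_at S a" "h permutes (S - set cs)"
  shows "cycle_list_of (cycle_of_list cs \<circ> h) a = cs"
proof -
  let ?g = "cycle_of_list cs \<circ> h"
  have d: "distinct cs" and ne: "cs \<noteq> []" and a: "a = cs ! 0" and a_in: "a \<in> set cs"
    using assms(1) by (auto simp: cycle_lists_at_def hd_conv_nth)
  have "card (orbit ?g a) = length cs"
    using orbit_cycle_comp_in[OF d assms(2) a_in] d by (simp add: distinct_card)
  moreover have "(?g ^^ i) a = cs ! i" if "i < length cs" for i
  proof -
    have "(?g ^^ i) a = (cycle_of_list cs ^^ i) a \<and> (cycle_of_list cs ^^ i) a \<in> set cs"
      by (rule funpow_eq_on_invariant[where T = "set cs" and p = "cycle_of_list cs",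
            OF cycle_comp_apply_in[OF assms(2)] _ a_in])
        (use permutes_in_image[OF cycle_permutes[of cs]] in auto)
    then have "(?g ^^ i) a = (cycle_of_list cs ^^ i) a" ..
    also have "\<dots> = cs ! i" using cycle_of_list_funpow_nth[OF d, of 0 i] ne that a by simp
    finally show ?thesis .
  qed
  ultimately show ?thesis unfolding cycle_list_of_def
    by (intro nth_equalityI) (simp_all del: upt_Suc)
qed

lemma perm_restrict_cycle_comp:
  assumes "h permutes (S - set cs)"
  shows "perm_restrict (cycle_of_list cs \<circ> h) (S - set cs) = h"
proof
  fix x show "perm_restrict (cycle_of_list cs \<circ> h) (S - set cs) x = h x"
    using cycle_comp_apply_out(1)[OF assms] permutes_not_in[OF assms]
    by (cases "x \<in> S - set cs") (auto simp: perm_restrict_simps)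
qed

lemma cycle_list_of_funpow_dist1:
  assumes "permutation g"
  shows "cycle_list_of g a = map (\<lambda>i. (g ^^ i) a) [0..<funpow_dist1 g a a]"
    and "distinct (cycle_list_of g a)"
    and "set (cycle_list_of g a) = orbit g a"
proof -
  have self: "a \<in> orbit g a" by (rule permutation_self_in_orbit[OF assms])
  have orb: "orbit g a = (\<lambda>n. (g ^^ n) a) ` {0..<funpow_dist1 g a a}"
    by (rule orbit_conv_funpow_dist1[OF self])
  have inj: "inj_on (\<lambda>n. (g ^^ n) a) {0..<funpow_dist1 g a a}"
    by (rule inj_on_funpow_dist1[OF self])
  show eq: "cycle_list_of g a = map (\<lambda>i. (g ^^ i) a) [0..<funpow_dist1 g a a]"
    using orb inj by (simp add: cycle_list_of_def card_image)
  show "distinct (cycle_list_of g a)" using eq inj by (simp add: distinct_map del: upt_Suc)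
  show "set (cycle_list_of g a) = orbit g a" using eq orb by (simp del: upt_Suc)
qed

lemma cycle_list_of_decomposition:
  assumes g: "g permutes S" and S: "finite S" and a: "a \<in> S"
  shows "cycle_list_of g a \<in> cycle_lists_at S a"
    and "perm_restrict g (S - set (cycle_list_of g a)) permutes (S - set (cycle_list_of g a))"
    and "g = cycle_of_list (cycle_list_of g a) \<circ> perm_restrict g (S - set (cycle_list_of g a))"
proof -
  have perm: "permutation g" using g S permutation_permutes by blast
  define k where "k = funpow_dist1 g a a"
  let ?cs = "cycle_list_of g a" and ?h = "perm_restrict g (S - set (cycle_list_of g a))"
  have cs: "?cs = map (\<lambda>i. (g ^^ i) a) [0..<k]" and dist: "distinct ?cs" and set_cs: "set ?cs = orbit g a"
    unfolding k_def by (rule cycle_list_of_funpow_dist1[OF perm])+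
  have k: "0 < k" unfolding k_def by simp
  have gk: "(g ^^ k) a = a"
    unfolding k_def by (rule funpow_dist1_prop[OF permutation_self_in_orbit[OF perm]])
  show "?cs \<in> cycle_lists_at S a"
    using cs k dist set_cs permutes_orbit_subset[OF g a]
    by (simp add: cycle_lists_at_def hd_map upt_conv_Cons del: upt_Suc)
  show h: "?h permutes (S - set ?cs)"
    unfolding set_cs by (rule perm_restrict_diff_cyclic[OF g cyclic_on_orbit[OF g S]])
  show "g = cycle_of_list ?cs \<circ> ?h"
  proof
    fix x show "g x = (cycle_of_list ?cs \<circ> ?h) x"
    proof (cases "x \<in> set ?cs")
      case True
      then obtain i where i: "i < k" "x = (g ^^ i) a" using cs by auto
      have len: "length ?cs = k" and x: "x = ?cs ! i" using i cs by simp_all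
      have "(cycle_of_list ?cs \<circ> ?h) x = (cycle_of_list ?cs ^^ 1) (?cs ! i)"
        using cycle_comp_apply_in[OF h True] x by simp
      also have "\<dots> = ?cs ! ((1 + i) mod k)"
        using cycle_of_list_funpow_nth[OF dist, of i 1] i len by simp
      also have "\<dots> = (g ^^ ((1 + i) mod k)) a" using cs k by simp
      also have "\<dots> = g x" using funpow_mod_eq[OF gk] i by simp
      finally show ?thesis by simp
    next
      case False
      have "(cycle_of_list ?cs \<circ> ?h) x = ?h x" by (rule cycle_comp_apply_out(1)[OF h False])
      also have "\<dots> = g x"
        using False permutes_not_in[OF g] by (cases "x \<in> S") (simp_all add: perm_restrict_simps)
      finally show ?thesis by simp
    qed
  qed
qed

lemma sum_permutes_split_cycle:
  fixes F :: "('a \<Rightarrow> 'a) \<Rightarrow> real"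
  assumes S: "finite S" and a: "a \<in> S"
  shows "(\<Sum>g\<in>{g. g permutes S}. F g)
     = (\<Sum>cs\<in>cycle_lists_at S a. \<Sum>h\<in>{h. h permutes (S - set cs)}. F (cycle_of_list cs \<circ> h))"
proof -
  let ?X = "SIGMA cs:cycle_lists_at S a. {h. h permutes (S - set cs)}"
  let ?f = "\<lambda>(cs, h). cycle_of_list cs \<circ> h"
  have "inj_on ?f ?X"
  proof (rule inj_onI, clarsimp)
    fix cs h cs' h'
    assume cs: "cs \<in> cycle_lists_at S a" "h permutes (S - set cs)"
      and cs': "cs' \<in> cycle_lists_at S a" "h' permutes (S - set cs')"
      and eq: "cycle_of_list cs \<circ> h = cycle_of_list cs' \<circ> h'"
    have "cs = cs'" using cycle_list_of_cycle_comp[OF cs] cycle_list_of_cycle_comp[OF cs'] eq by metis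
    moreover from this have "h = h'"
      using perm_restrict_cycle_comp[OF cs(2)] perm_restrict_cycle_comp[OF cs'(2)] eq by metis
    ultimately show "cs = cs' \<and> h = h'" ..
  qed
  moreover have "?f ` ?X = {g. g permutes S}"
  proof (intro set_eqI iffI)
    fix g assume "g \<in> ?f ` ?X"
    then show "g \<in> {g. g permutes S}"
      using cycle_comp_permutes by (fastforce simp: cycle_lists_at_def)
  next
    fix g assume "g \<in> {g. g permutes S}"
    then show "g \<in> ?f ` ?X"
      using cycle_list_of_decomposition[OF _ S a, of g] by (auto intro!: image_eqI)
  qed
  ultimately have bij: "bij_betw ?f ?X {g. g permutes S}" by (simp add: bij_betw_def)
  have "(\<Sum>cs\<in>cycle_lists_at S a. \<Sum>h\<in>{h. h permutes (S - set cs)}. F (cycle_of_list cs \<circ> h))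
      = (\<Sum>x\<in>?X. F (?f x))"
    using S by (subst sum.Sigma) (auto simp: split_def finite_cycle_lists_at intro!: finite_permutations)
  also have "\<dots> = (\<Sum>g\<in>{g. g permutes S}. F g)" by (rule sum.reindex_bij_betw[OF bij])
  finally show ?thesis by simp
qed

lemma sum_cycle_lists_at_by_length:
  fixes f :: "nat \<Rightarrow> real"
  assumes S: "finite S" and a: "a \<in> S"
  shows "(\<Sum>cs\<in>cycle_lists_at S a. fact (card S - length cs) * f (length cs))
       = fact (card S - 1) * (\<Sum>k=1..card S. f k)"
proof -
  define m where "m = card S - 1"
  define Y where "Y = {ys. distinct ys \<and> set ys \<subseteq> S - {a}}"
  have card_Sa: "card (S - {a}) = m" using S a m_def by simp
  have "0 < card S" using S a card_gt_0_iff by blast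
  then have card_S: "card S = Suc m" unfolding m_def by simp
  have len_Y: "length ys \<le> m" if "ys \<in> Y" for ys
    using that card_mono[of "S - {a}" "set ys"] S card_Sa by (simp add: Y_def distinct_card[symmetric])
  have fin_Y: "finite Y"
    using finite_subset_distinct[of "S - {a}"] S unfolding Y_def by (simp add: conj_commute)
  have "(\<Sum>cs\<in>cycle_lists_at S a. fact (card S - length cs) * f (length cs))
      = (\<Sum>ys\<in>Y. fact (m - length ys) * f (Suc (length ys)))"
    unfolding cycle_lists_at_eq_image_Cons[OF a] Y_def[symmetric] card_S
    by (subst sum.reindex) (auto intro: inj_onI)
  also have "\<dots> = (\<Sum>k\<le>m. \<Sum>ys\<in>{ys \<in> Y. length ys = k}. fact (m - length ys) * f (Suc (length ys)))"
    using fin_Y len_Y by (intro sum.group[symmetric]) auto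
  also have "\<dots> = (\<Sum>k\<le>m. fact m * f (Suc k))"
  proof (rule sum.cong[OF refl])
    fix k assume "k \<in> {..m}"
    then have k: "k \<le> m" by simp
    have "{ys \<in> Y. length ys = k} = {xs. length xs = k \<and> distinct xs \<and> set xs \<subseteq> S - {a}}"
      unfolding Y_def by auto
    then have "card {ys \<in> Y. length ys = k} * fact (m - k) = fact m"
      using card_lists_distinct_length_eq[of "S - {a}" k] fact_eq_fact_times[of "m - k" m] S card_Sa k
      by simp
    then have "real (card {ys \<in> Y. length ys = k} * fact (m - k)) = real (fact m)"
      by (rule arg_cong)
    then have "real (card {ys \<in> Y. length ys = k}) * fact (m - k) = fact m"
      unfolding of_nat_mult of_nat_fact .
    moreover have "(\<Sum>ys\<in>{ys \<in> Y. length ys = k}. fact (m - length ys) * f (Suc (length ys)))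
        = real (card {ys \<in> Y. length ys = k}) * fact (m - k) * f (Suc k)"
      by simp
    ultimately show "(\<Sum>ys\<in>{ys \<in> Y. length ys = k}. fact (m - length ys) * f (Suc (length ys)))
        = fact m * f (Suc k)"
      by simp
  qed
  also have "\<dots> = fact m * (\<Sum>k=1..Suc m. f k)"
    by (simp only: sum_distrib_left One_nat_def sum.atLeast1_atMost_eq lessThan_Suc_atMost)
  finally show ?thesis using card_S by simp
qed

section \<open>Weighted counts of permutations without a cycle of given length\<close>

definition no_cycle_of_length :: "nat \<Rightarrow> 'a set \<Rightarrow> ('a \<Rightarrow> 'a) \<Rightarrow> bool" where
  "no_cycle_of_length d S g \<longleftrightarrow> (\<forall>x\<in>S. card (orbit g x) \<noteq> d)"

lemma no_cycle_of_length_cycle_comp: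
  assumes "cs \<in> cycle_lists_at S a" "h permutes (S - set cs)"
  shows "no_cycle_of_length d S (cycle_of_list cs \<circ> h)
     \<longleftrightarrow> length cs \<noteq> d \<and> no_cycle_of_length d (S - set cs) h"
proof -
  have d: "distinct cs" and sub: "set cs \<subseteq> S" and ne: "cs \<noteq> []"
    using assms(1) by (auto simp: cycle_lists_at_def)
  have "card (orbit (cycle_of_list cs \<circ> h) x) = length cs" if "x \<in> set cs" for x
    using orbit_cycle_comp_in[OF d assms(2) that] d by (simp add: distinct_card)
  moreover have "orbit (cycle_of_list cs \<circ> h) x = orbit h x" if "x \<in> S - set cs" for x
    using orbit_cycle_comp_out[OF assms(2) that] .
  moreover obtain x0 where "x0 \<in> set cs" using ne by (cases cs) auto
  ultimately show ?thesis
    using sub unfolding no_cycle_of_length_def by (metis Diff_iff subsetD)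
qed

lemma sum_permutes_filter:
  assumes "finite S"
  shows "(\<Sum>g | g permutes S \<and> P g. w g) = (\<Sum>g\<in>{g. g permutes S}. if P g then w g else 0)"
  using sum.inter_filter[OF finite_permutations[OF assms], of w P] by (simp add: conj_commute)

lemma sum_no_cycle_of_length_cycle_comp:
  fixes w :: "('a \<Rightarrow> 'a) \<Rightarrow> real"
  assumes w: "\<And>h. permutation h \<Longrightarrow> w (cycle_of_list cs \<circ> h) = e (length cs) * w h"
    and S: "finite S" and cs: "cs \<in> cycle_lists_at S a"
  shows "(\<Sum>h\<in>{h. h permutes (S - set cs)}. if no_cycle_of_length d S (cycle_of_list cs \<circ> h)
             then w (cycle_of_list cs \<circ> h) else 0)
       = (if length cs = d then 0 else
            e (length cs) * (\<Sum>h | h permutes (S - set cs) \<and> no_cycle_of_length d (S - set cs) h. w h))"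
proof -
  have fin: "finite (S - set cs)" using S by simp
  have "w (cycle_of_list cs \<circ> h) = e (length cs) * w h" if "h permutes (S - set cs)" for h
    using w fin that permutation_permutes by blast
  then show ?thesis
    by (auto simp: no_cycle_of_length_cycle_comp[OF cs] sum_permutes_filter[OF fin] sum_distrib_left
        intro!: sum.cong)
qed

theorem sum_weight_no_cycle_of_length:
  fixes w :: "('a \<Rightarrow> 'a) \<Rightarrow> real" and e c :: "nat \<Rightarrow> real"
  assumes w_id: "w id = 1"
    and w_cycle_comp: "\<And>cs h. distinct cs \<Longrightarrow> permutation h
                        \<Longrightarrow> w (cycle_of_list cs \<circ> h) = e (length cs) * w h"
    and c_0: "c 0 = 1"
    and c_rec: "\<And>m. 1 \<le> m \<Longrightarrow> real m * c m = (\<Sum>k=1..m. (if k = d then 0 else e k) * c (m - k))"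
    and S: "finite S"
  shows "(\<Sum>g | g permutes S \<and> no_cycle_of_length d S g. w g) = fact (card S) * c (card S)"
  using S
proof (induction "card S" arbitrary: S rule: less_induct)
  case less
  show ?case
  proof (cases "S = {}")
    case True
    then have "{g. g permutes S \<and> no_cycle_of_length d S g} = {id}"
      by (auto simp: no_cycle_of_length_def)
    then show ?thesis using True w_id c_0 by simp
  next
    case False
    then obtain a where a: "a \<in> S" by blast
    define m where "m = card S"
    have m: "1 \<le> m" using False less.prems m_def by (simp add: Suc_le_eq card_gt_0_iff)
    have "(\<Sum>h\<in>{h. h permutes (S - set cs)}. if no_cycle_of_length d S (cycle_of_list cs \<circ> h)
                then w (cycle_of_list cs \<circ> h) else 0)
        = fact (m - length cs) * ((if length cs = d then 0 else e (length cs)) * c (m - length cs))"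
      if cs: "cs \<in> cycle_lists_at S a" for cs
    proof -
      have "distinct cs" "set cs \<subseteq> S" "cs \<noteq> []" using cs by (auto simp: cycle_lists_at_def)
      then have "card (S - set cs) = m - length cs" and "card (S - set cs) < card S"
        using less.prems m m_def by (simp_all add: card_Diff_subset distinct_card)
      then show ?thesis
        using sum_no_cycle_of_length_cycle_comp[where w = w and e = e,
            OF w_cycle_comp[OF \<open>distinct cs\<close>] less.prems cs]
          less.hyps[of "S - set cs"] less.prems by simp
    qed
    then have "(\<Sum>g | g permutes S \<and> no_cycle_of_length d S g. w g)
        = (\<Sum>cs\<in>cycle_lists_at S a.
             fact (m - length cs) * ((if length cs = d then 0 else e (length cs)) * c (m - length cs)))"
      unfolding sum_permutes_filter[OF less.prems] sum_permutes_split_cycle[OF less.prems a]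
      by (rule sum.cong[OF refl])
    also have "\<dots> = fact (m - 1) * (\<Sum>k=1..m. (if k = d then 0 else e k) * c (m - k))"
      unfolding m_def by (rule sum_cycle_lists_at_by_length[OF less.prems a])
    also have "\<dots> = fact m * c m"
      using c_rec[OF m] fact_reduce[of m, where 'a = real] m by simp
    finally show ?thesis unfolding m_def .
  qed
qed

section \<open>Partial sums of the exponential series\<close>

definition exp_partial :: "real \<Rightarrow> nat \<Rightarrow> real" where
  "exp_partial x j = (\<Sum>k\<le>j. x ^ k / fact k)"

lemma exp_partial_Suc: "exp_partial x (Suc j) = exp_partial x j + x ^ Suc j / fact (Suc j)"
  by (simp add: exp_partial_def)

lemma exp_partial_0 [simp]: "exp_partial x 0 = 1"
  by (simp add: exp_partial_def)

lemma exp_partial_zero [simp]: "exp_partial 0 j = 1"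
  by (induction j) (simp_all add: exp_partial_Suc)

lemma exp_partial_1_2_3:
  "exp_partial x (Suc 0) = 1 + x"
  "exp_partial x 2 = 1 + x + x ^ 2 / 2"
  "exp_partial x 3 = 1 + x + x ^ 2 / 2 + x ^ 3 / 6"
  by (simp_all add: exp_partial_def numeral_3_eq_3 numeral_2_eq_2)

lemma of_nat_Suc_mult_power_div_fact:
  fixes x :: real
  shows "real (Suc j) * (x ^ Suc j / fact (Suc j)) = x * (x ^ j / fact j)"
  by (simp add: fact_Suc del: of_nat_Suc)

lemma exp_partial_Suc_Suc:
  "exp_partial x (Suc (Suc j))
     = exp_partial x j + x ^ Suc j / fact (Suc j) * (1 + x / real (Suc (Suc j)))"
proof -
  have "x ^ Suc (Suc j) / fact (Suc (Suc j))
      = real (Suc (Suc j)) * (x ^ Suc (Suc j) / fact (Suc (Suc j))) / real (Suc (Suc j))"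
    by (rule nonzero_mult_div_cancel_left[symmetric]) (simp del: of_nat_Suc)
  also have "\<dots> = x ^ Suc j / fact (Suc j) * (x / real (Suc (Suc j)))"
    unfolding of_nat_Suc_mult_power_div_fact by (simp add: ac_simps del: of_nat_Suc power_Suc fact_Suc)
  finally have step: "x ^ Suc (Suc j) / fact (Suc (Suc j)) = x ^ Suc j / fact (Suc j) * (x / real (Suc (Suc j)))" .
  show ?thesis unfolding exp_partial_Suc step by (simp only: distrib_left mult_1_right add.assoc)
qed

text \<open>For \<open>-1 \<le> x \<le> 0\<close> the terms of the series alternate in sign and decrease in absolute
  value.\<close>

lemma exp_partial_even_decreasing:
  assumes "-1 \<le> x" "x \<le> 0"
  shows "decseq (\<lambda>k. exp_partial x (2 * k))"
proof (rule decseq_SucI)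
  fix k
  have "x ^ Suc (2 * k) \<le> 0" unfolding power_le_zero_eq using assms by simp
  moreover have "0 \<le> 1 + x / real (Suc (Suc (2 * k)))" using assms by (simp add: field_simps)
  ultimately
  have "x ^ Suc (2 * k) / fact (Suc (2 * k)) * (1 + x / real (Suc (Suc (2 * k)))) \<le> 0"
    by (simp add: mult_nonpos_nonneg divide_nonpos_pos del: power_Suc fact_Suc of_nat_Suc)
  then show "exp_partial x (2 * Suc k) \<le> exp_partial x (2 * k)"
    by (simp add: exp_partial_Suc_Suc del: power_Suc fact_Suc of_nat_Suc)
qed

lemma exp_partial_odd_increasing:
  assumes "-1 \<le> x" "x \<le> 0"
  shows "incseq (\<lambda>k. exp_partial x (Suc (2 * k)))"
proof (rule incseq_SucI)
  fix k
  have "0 \<le> x ^ Suc (Suc (2 * k))" unfolding zero_le_power_eq by simp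
  moreover have "0 \<le> 1 + x / real (Suc (Suc (Suc (2 * k))))" using assms by (simp add: field_simps)
  ultimately have "0 \<le> x ^ Suc (Suc (2 * k)) / fact (Suc (Suc (2 * k))) * (1 + x / real (Suc (Suc (Suc (2 * k)))))"
    by (simp del: power_Suc fact_Suc of_nat_Suc)
  then show "exp_partial x (Suc (2 * k)) \<le> exp_partial x (Suc (2 * Suc k))"
    by (simp add: exp_partial_Suc_Suc del: power_Suc fact_Suc of_nat_Suc)
qed

lemma exp_partial_odd_le_even:
  assumes "-1 \<le> x" "x \<le> 0"
  shows "exp_partial x (Suc (2 * k)) \<le> exp_partial x (2 * l)"
proof -
  let ?M = "max k l"
  have "exp_partial x (Suc (2 * k)) \<le> exp_partial x (Suc (2 * ?M))"
    using exp_partial_odd_increasing[OF assms] by (simp add: incseq_def)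
  also have "\<dots> \<le> exp_partial x (2 * ?M)"
  proof -
    have "x ^ Suc (2 * ?M) \<le> 0" unfolding power_le_zero_eq using assms by simp
    then show ?thesis by (simp add: exp_partial_Suc divide_nonpos_pos del: power_Suc fact_Suc)
  qed
  also have "\<dots> \<le> exp_partial x (2 * l)"
    using exp_partial_even_decreasing[OF assms] by (simp add: decseq_def)
  finally show ?thesis .
qed

lemma exp_partial_bounds:
  assumes "-1 \<le> x" "x \<le> 0"
  shows "exp_partial x 1 \<le> exp_partial x j" and "exp_partial x j \<le> 1"
    and "1 \<le> j \<Longrightarrow> exp_partial x j \<le> exp_partial x 2"
    and "2 \<le> j \<Longrightarrow> exp_partial x 3 \<le> exp_partial x j"
proof -
  obtain l where j: "j = 2 * l \<or> j = Suc (2 * l)"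
    by (metis dvd_mult_div_cancel odd_two_times_div_two_succ Suc_eq_plus1)
  have even: "l' \<le> l'' \<Longrightarrow> exp_partial x (2 * l'') \<le> exp_partial x (2 * l')" for l' l''
    using exp_partial_even_decreasing[OF assms] by (simp add: decseq_def)
  have odd: "l' \<le> l'' \<Longrightarrow> exp_partial x (Suc (2 * l')) \<le> exp_partial x (Suc (2 * l''))" for l' l''
    using exp_partial_odd_increasing[OF assms] by (simp add: incseq_def)
  note odd_even = exp_partial_odd_le_even[OF assms]
  show "exp_partial x 1 \<le> exp_partial x j"
    using j odd_even[of 0 l] odd[of 0 l] by auto
  show "exp_partial x j \<le> 1"
    using j odd_even[of l 0] even[of 0 l] by auto
  show "exp_partial x j \<le> exp_partial x 2" if "1 \<le> j"
    using j that odd_even[of l 1] even[of 1 l] by auto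
  show "exp_partial x 3 \<le> exp_partial x j" if "2 \<le> j"
    using j that odd_even[of 1 l] odd[of 1 l] by (auto simp: numeral_3_eq_3)
qed

lemma exp_partial_minus_inverse_bounds:
  assumes "1 \<le> d"
  shows "1 - 1 / real d \<le> exp_partial (- (1 / real d)) j" and "exp_partial (- (1 / real d)) j \<le> 1"
  using exp_partial_bounds(1,2)[of "- (1 / real d)" j] assms by (simp_all add: exp_partial_1_2_3)

lemma one_minus_exp_partial_ge:
  assumes "1 \<le> d" "2 \<le> i"
  shows "1 / (2 * real d) \<le> 1 - exp_partial (- (1 / real d)) i"
proof -
  have "exp_partial (- (1 / real d)) i \<le> 1 - 1 / real d + 1 / (2 * real d ^ 2)"
    using exp_partial_bounds(3)[of "- (1 / real d)" i] assms
    by (simp add: exp_partial_1_2_3 power2_eq_square)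
  moreover have "1 / (2 * real d ^ 2) \<le> 1 / (2 * real d)"
    using assms by (intro divide_left_mono) (auto simp: power2_eq_square)
  moreover have "1 / real d - 1 / (2 * real d) = 1 / (2 * real d)" by simp
  ultimately show ?thesis by linarith
qed

lemma sum_power_div_fact_mult:
  "(\<Sum>k\<le>n. y ^ k / fact k * (x ^ (n - k) / fact (n - k))) = (y + x) ^ n / (fact n :: real)"
proof -
  have "(\<Sum>k\<le>n. y ^ k / fact k * (x ^ (n - k) / fact (n - k)))
      = (\<Sum>k\<le>n. of_nat (n choose k) * y ^ k * x ^ (n - k)) / fact n"
    unfolding sum_divide_distrib
    by (intro sum.cong refl) (simp add: binomial_fact field_simps)
  also have "\<dots> = (y + x) ^ n / fact n" by (simp only: binomial_ring)
  finally show ?thesis .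
qed

lemma exp_partial_convolution:
  "(\<Sum>k\<le>j. y ^ k / fact k * exp_partial x (j - k)) = exp_partial (y + x) j"
proof (induction j)
  case (Suc j)
  let ?a = "\<lambda>k. y ^ k / fact k" and ?t = "\<lambda>k. x ^ k / fact k"
  have "(\<Sum>k\<le>j. ?a k * exp_partial x (Suc j - k))
      = (\<Sum>k\<le>j. ?a k * exp_partial x (j - k) + ?a k * ?t (Suc j - k))"
    by (intro sum.cong refl) (simp add: Suc_diff_le exp_partial_Suc distrib_left del: power_Suc fact_Suc)
  then have "(\<Sum>k\<le>Suc j. ?a k * exp_partial x (Suc j - k))
      = (\<Sum>k\<le>j. ?a k * exp_partial x (j - k) + ?a k * ?t (Suc j - k)) + ?a (Suc j)"
    by simp
  also have "\<dots> = exp_partial (y + x) j + ((\<Sum>k\<le>j. ?a k * ?t (Suc j - k)) + ?a (Suc j) * ?t 0)"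
    unfolding sum.distrib Suc.IH by simp
  also have "\<dots> = exp_partial (y + x) j + (\<Sum>k\<le>Suc j. ?a k * ?t (Suc j - k))"
    by (simp only: sum.atMost_Suc diff_self_eq_0)
  also have "\<dots> = exp_partial (y + x) (Suc j)"
    by (simp only: sum_power_div_fact_mult exp_partial_Suc)
  finally show ?case .
qed simp

lemma aseq_eq_exp_partial: "aseq d j = 1 - exp_partial (- (1 / real d)) j"
proof (induction j rule: less_induct)
  case (less j)
  let ?E = "exp_partial (- (1 / real d))"
  show ?case
  proof (cases j)
    case (Suc m)
    have "aseq d j = (\<Sum>k\<in>{1..j}. 1 / (fact k * real d ^ k) * (1 - aseq d (j - k)))"
      using Suc by simp
    also have "\<dots> = (\<Sum>k\<in>{1..j}. (1 / real d) ^ k / fact k * ?E (j - k))"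
      using Suc less by (intro sum.cong refl) (auto simp: power_one_over mult.commute)
    also have "\<dots> = (\<Sum>k\<le>j. (1 / real d) ^ k / fact k * ?E (j - k)) - ?E j"
      by (simp add: atMost_atLeast0 sum.atLeast_Suc_atMost)
    also have "\<dots> = 1 - ?E j" unfolding exp_partial_convolution by simp
    finally show ?thesis .
  qed simp
qed

section \<open>Solving the recursion\<close>

text \<open>The coefficient of \<open>t ^ l\<close> in \<open>exp (x t ^ d)\<close>.\<close>

definition exp_monomial_coeff :: "nat \<Rightarrow> real \<Rightarrow> nat \<Rightarrow> real" where
  "exp_monomial_coeff d x l = (if d dvd l then x ^ (l div d) / fact (l div d) else 0)"

text \<open>The generating function of the signed counts is
  \<open>exp (\<Sum>k\<noteq>d. (-1)^(k-1) t^k / k) = (1 + t) exp ((-1)^d t^d / d)\<close>.\<close>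

definition signed_no_cycle_coeff :: "nat \<Rightarrow> nat \<Rightarrow> real" where
  "signed_no_cycle_coeff d m = exp_monomial_coeff d ((-1) ^ d / real d) m
     + (if m = 0 then 0 else exp_monomial_coeff d ((-1) ^ d / real d) (m - 1))"

lemma of_nat_mult_exp_monomial_coeff:
  assumes "1 \<le> d"
  shows "real l * exp_monomial_coeff d x l
       = (if d \<le> l then real d * x * exp_monomial_coeff d x (l - d) else 0)"
proof (cases "d dvd l \<and> l \<noteq> 0")
  case True
  then obtain j where l: "l = d * Suc j" by (metis dvdE mult_0_right not0_implies_Suc)
  then have "l - d = d * j" "d \<le> l" by (simp_all add: algebra_simps)
  have l_real: "real l = real d * real (Suc j)" using l by (simp add: algebra_simps)
  have "exp_monomial_coeff d x l = x ^ Suc j / fact (Suc j)"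
    using assms l by (simp add: exp_monomial_coeff_def del: of_nat_Suc)
  then have "real l * exp_monomial_coeff d x l = real d * (real (Suc j) * (x ^ Suc j / fact (Suc j)))"
    by (simp only: l_real mult.assoc)
  also have "\<dots> = real d * x * exp_monomial_coeff d x (l - d)"
    using assms \<open>l - d = d * j\<close> by (simp add: of_nat_Suc_mult_power_div_fact exp_monomial_coeff_def)
  finally show ?thesis using \<open>d \<le> l\<close> by simp
next
  case False
  then have "\<not> d dvd (l - d)" if "d \<le> l" "l \<noteq> 0"
    using that by (metis dvd_add_triv_right_iff le_add_diff_inverse2)
  then show ?thesis using False assms by (auto simp: exp_monomial_coeff_def)
qed

lemma sum_exp_monomial_coeff:
  assumes "1 \<le> d"
  shows "(\<Sum>l\<le>m. exp_monomial_coeff d x l) = exp_partial x (m div d)"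
proof (induction m)
  case 0
  show ?case by (simp add: exp_partial_def exp_monomial_coeff_def)
next
  case (Suc m)
  then show ?case
    using assms div_Suc[of m d]
    by (auto simp: exp_monomial_coeff_def exp_partial_Suc dvd_eq_mod_eq_0)
qed

lemma sum_remove_term:
  fixes e f :: "nat \<Rightarrow> real"
  assumes "1 \<le> d"
  shows "(\<Sum>k=1..m. (if k = d then 0 else e k) * f (m - k))
       = (\<Sum>k=1..m. e k * f (m - k)) - (if d \<le> m then e d * f (m - d) else 0)"
proof -
  have "(\<Sum>k=1..m. (if k = d then 0 else e k) * f (m - k))
      = (\<Sum>k=1..m. e k * f (m - k) - (if k = d then e k * f (m - k) else 0))"
    by (intro sum.cong) auto
  then show ?thesis using assms by (simp add: sum_subtractf)
qed

text \<open>For \<open>c m = \<Sum>l\<le>m. \<gamma> l\<close> with \<open>\<gamma> = exp_monomial_coeff d x\<close>, summation by parts gives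
  \<open>m c m = \<Sum>p<m. c p + d x c (m - d)\<close>; with \<open>d x = -1\<close> this is the unsigned recursion.\<close>

lemma exp_partial_div_rec:
  assumes d: "1 \<le> d"
  shows "real m * exp_partial (- (1 / real d)) (m div d)
       = (\<Sum>k=1..m. (if k = d then 0 else 1) * exp_partial (- (1 / real d)) ((m - k) div d))"
proof -
  let ?\<gamma> = "exp_monomial_coeff d (- (1 / real d))"
  define c where "c m = (\<Sum>l\<le>m. ?\<gamma> l)" for m
  have c: "c m = exp_partial (- (1 / real d)) (m div d)" for m
    unfolding c_def by (rule sum_exp_monomial_coeff[OF d])
  have by_parts: "(\<Sum>p<m. c p) = real m * c m - (\<Sum>l\<le>m. real l * ?\<gamma> l)" for m
    by (induction m) (simp_all add: c_def algebra_simps)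
  have shift: "(\<Sum>l\<le>m. if d \<le> l then ?\<gamma> (l - d) else 0) = (if d \<le> m then c (m - d) else 0)" for m
  proof (induction m)
    case (Suc m)
    then show ?case
      using d by (cases "d \<le> m") (auto simp: c_def Suc_diff_le le_Suc_eq)
  qed (use d in simp)
  have parts: "(\<Sum>l\<le>m. real l * ?\<gamma> l) = - (if d \<le> m then c (m - d) else 0)"
  proof -
    have "(\<Sum>l\<le>m. real l * ?\<gamma> l) = (\<Sum>l\<le>m. - (if d \<le> l then ?\<gamma> (l - d) else 0))"
      using d by (intro sum.cong refl) (simp add: of_nat_mult_exp_monomial_coeff)
    then show ?thesis by (simp add: sum_negf shift)
  qed
  have "(\<Sum>k=1..m. (if k = d then 0 else 1) * c (m - k))
      = (\<Sum>p<m. c p) - (if d \<le> m then c (m - d) else 0)"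
    using sum_remove_term[OF d, where e = "\<lambda>_. 1" and f = c and m = m] sum.nat_diff_reindex[of c m]
    by (simp add: sum.atLeast1_atMost_eq)
  also have "\<dots> = real m * c m"
    by (simp add: by_parts parts)
  finally show ?thesis unfolding c by simp
qed

lemma signed_no_cycle_coeff_0: "signed_no_cycle_coeff d 0 = 1"
  by (simp add: signed_no_cycle_coeff_def exp_monomial_coeff_def)

lemma signed_no_cycle_coeff_rec:
  assumes d: "1 \<le> d"
  shows "real m * signed_no_cycle_coeff d m
       = (\<Sum>k=1..m. (if k = d then 0 else (-1) ^ (k - 1)) * signed_no_cycle_coeff d (m - k))"
proof -
  let ?r = "signed_no_cycle_coeff d" and ?\<gamma> = "exp_monomial_coeff d ((-1) ^ d / real d)"
  have telescope: "(\<Sum>k<m. (-1) ^ k * ?r (m - Suc k)) = (if m = 0 then 0 else ?\<gamma> (m - 1))" for m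
  proof (induction m)
    case (Suc m)
    have "(\<Sum>k<Suc m. (-1) ^ k * ?r (Suc m - Suc k))
        = ?r m + (\<Sum>k<m. (-1) ^ Suc k * ?r (m - Suc k))"
      by (simp only: sum.lessThan_Suc_shift) simp
    also have "\<dots> = ?r m - (\<Sum>k<m. (-1) ^ k * ?r (m - Suc k))"
      by (simp add: sum_negf)
    finally show ?case using Suc by (simp add: signed_no_cycle_coeff_def)
  qed simp
  have sign: "(-1::real) ^ (d - 1) = - ((-1) ^ d)"
    using d by (cases d) auto
  have "real m * ?r m = (if m = 0 then 0 else ?\<gamma> (m - 1)) + (if d \<le> m then (-1) ^ d * ?r (m - d) else 0)"
  proof (cases "m = 0")
    case False
    have dx: "real d * ((-1) ^ d / real d) = (-1) ^ d" using d by simp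
    have \<gamma>: "real l * ?\<gamma> l = (if d \<le> l then (-1) ^ d * ?\<gamma> (l - d) else 0)" for l
      using of_nat_mult_exp_monomial_coeff[OF d, of l] dx by simp
    have "real m * ?r m = real m * ?\<gamma> m + real (m - 1) * ?\<gamma> (m - 1) + ?\<gamma> (m - 1)"
      using False by (simp add: signed_no_cycle_coeff_def algebra_simps of_nat_diff)
    also have "\<dots> = (if d \<le> m then (-1) ^ d * ?\<gamma> (m - d) else 0)
        + (if d \<le> m - 1 then (-1) ^ d * ?\<gamma> (m - 1 - d) else 0) + ?\<gamma> (m - 1)"
      by (simp only: \<gamma>)
    also have "\<dots> = ?\<gamma> (m - 1) + (if d \<le> m then (-1) ^ d * ?r (m - d) else 0)"
      using False d by (auto simp: signed_no_cycle_coeff_def algebra_simps)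
    finally show ?thesis using False by simp
  qed (use d in simp)
  then show ?thesis
    using sum_remove_term[OF d, where e = "\<lambda>k. (-1) ^ (k - 1)" and f = ?r and m = m]
      telescope[of m] sign by (simp add: sum.atLeast1_atMost_eq)
qed

lemma card_no_cycle_of_length:
  assumes "1 \<le> d" "finite S"
  shows "real (card {g. g permutes S \<and> no_cycle_of_length d S g})
       = fact (card S) * exp_partial (- (1 / real d)) (card S div d)"
proof -
  have "(\<Sum>g | g permutes S \<and> no_cycle_of_length d S g. 1::real)
      = fact (card S) * exp_partial (- (1 / real d)) (card S div d)"
    by (rule sum_weight_no_cycle_of_length[where e = "\<lambda>_. 1"])
      (use assms exp_partial_div_rec in simp_all)
  then show ?thesis by simp
qed

lemma sum_sign_no_cycle_of_length:
  assumes "1 \<le> d" "finite S"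
  shows "(\<Sum>g | g permutes S \<and> no_cycle_of_length d S g. real_of_int (sign g))
       = fact (card S) * signed_no_cycle_coeff d (card S)"
  by (rule sum_weight_no_cycle_of_length[where e = "\<lambda>k. (-1) ^ (k - 1)"])
    (use assms in \<open>simp_all add: sign_id sign_compose permutation_of_cycle sign_cycle_of_list
      signed_no_cycle_coeff_0 signed_no_cycle_coeff_rec\<close>)

lemma sum_sign_permutes_eq_0:
  assumes "finite S" "a \<in> S" "b \<in> S" "a \<noteq> b"
  shows "(\<Sum>p\<in>{p. p permutes S}. real_of_int (sign p)) = 0"
proof -
  let ?t = "Transposition.transpose a b"
  have bij: "bij_betw ((\<circ>) ?t) {p. p permutes S} {p. p permutes S}"
    by (rule bij_betwI[where g = "(\<circ>) ?t"])
      (auto simp: permutes_compose permutes_swap_id assms comp_assoc[symmetric])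
  have "(\<Sum>p\<in>{p. p permutes S}. real_of_int (sign p))
      = (\<Sum>p\<in>{p. p permutes S}. real_of_int (sign (?t \<circ> p)))"
    by (rule sum.reindex_bij_betw[OF bij, symmetric])
  also have "\<dots> = (\<Sum>p\<in>{p. p permutes S}. - real_of_int (sign p))"
  proof (rule sum.cong[OF refl])
    fix p assume "p \<in> {p. p permutes S}"
    then have "permutation p" using assms(1) permutation_permutes by blast
    then show "real_of_int (sign (?t \<circ> p)) = - real_of_int (sign p)"
      using assms(4) by (simp add: sign_compose permutation_swap_id sign_swap_id)
  qed
  also have "\<dots> = - (\<Sum>p\<in>{p. p permutes S}. real_of_int (sign p))"
    by (rule sum_negf)
  finally show ?thesis by simp
qed

lemma cycA_eq: "cycA n d = {g. g permutes {1..n} \<and> \<not> no_cycle_of_length d {1..n} g}"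
  unfolding cycA_def has_cycle_of_length_def no_cycle_of_length_def by auto

lemma permutes_eq_cycA_Un:
  "{g. g permutes {1..n}} = cycA n d \<union> {g. g permutes {1..n} \<and> no_cycle_of_length d {1..n} g}"
  and cycA_Int_no_cycle: "cycA n d \<inter> {g. g permutes {1..n} \<and> no_cycle_of_length d {1..n} g} = {}"
  unfolding cycA_eq by auto

lemma finite_cycA: "finite (cycA n d)"
  by (rule finite_subset[OF _ finite_permutations[OF finite_atLeastAtMost]]) (auto simp: cycA_eq)

lemma card_cycA:
  assumes "1 \<le> d"
  shows "real (card (cycA n d)) = fact n * (1 - exp_partial (- (1 / real d)) (n div d))"
proof -
  let ?N = "{g. g permutes {1..n} \<and> no_cycle_of_length d {1..n} g}"
  have "finite ?N" by (rule finite_subset[OF _ finite_permutations[OF finite_atLeastAtMost]]) auto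
  then have "card {g. g permutes {1..n}} = card (cycA n d) + card ?N"
    unfolding permutes_eq_cycA_Un[of n d] using finite_cycA cycA_Int_no_cycle
    by (intro card_Un_disjoint) auto
  moreover have "card {g. g permutes {1..n}} = fact n" by (simp add: card_permutations)
  ultimately have "fact n = real (card (cycA n d)) + real (card ?N)"
    by (metis of_nat_add of_nat_fact)
  then show ?thesis
    using card_no_cycle_of_length[OF assms, of "{1..n}"] by (simp add: algebra_simps)
qed

lemma card_cycA_plus_minus:
  assumes "1 \<le> d" "2 \<le> n"
  shows "real (card (cycA_plus n d)) - real (card (cycA_minus n d))
       = - (fact n * signed_no_cycle_coeff d n)"
proof -
  let ?N = "{g. g permutes {1..n} \<and> no_cycle_of_length d {1..n} g}"
  have "finite ?N" by (rule finite_subset[OF _ finite_permutations[OF finite_atLeastAtMost]]) auto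
  have "(\<Sum>g\<in>cycA n d. real_of_int (sign g))
      = real (card (cycA_plus n d)) - real (card (cycA_minus n d))"
  proof -
    have "(\<Sum>g\<in>cycA n d. real_of_int (sign g)) = (\<Sum>g\<in>cycA n d. if evenperm g then 1 else - 1)"
      by (intro sum.cong refl) (simp add: sign_def)
    also have "\<dots> = real (card (cycA_plus n d)) - real (card (cycA_minus n d))"
      using finite_cycA by (simp add: sum.If_cases cycA_plus_def cycA_minus_def Int_def)
    finally show ?thesis .
  qed
  moreover have "(\<Sum>g\<in>cycA n d. real_of_int (sign g)) + (\<Sum>g\<in>?N. real_of_int (sign g))
      = (\<Sum>g\<in>{g. g permutes {1..n}}. real_of_int (sign g))"
    unfolding permutes_eq_cycA_Un[of n d]
    by (rule sum.union_disjoint[symmetric, OF finite_cycA \<open>finite ?N\<close> cycA_Int_no_cycle])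
  moreover have "(\<Sum>g\<in>{g. g permutes {1..n}}. real_of_int (sign g)) = 0"
    by (rule sum_sign_permutes_eq_0[of _ 1 2]) (use assms(2) in auto)
  moreover have "(\<Sum>g\<in>?N. real_of_int (sign g)) = fact n * signed_no_cycle_coeff d n"
    using sum_sign_no_cycle_of_length[OF assms(1), of "{1..n}"] by simp
  ultimately show ?thesis by linarith
qed

lemma signed_no_cycle_coeff_one: "signed_no_cycle_coeff 1 (Suc m) = (-1) ^ m * (real m / fact (Suc m))"
proof -
  have "signed_no_cycle_coeff 1 (Suc m) = (-1) ^ Suc m / fact (Suc m) + (-1) ^ m / fact m"
    by (simp add: signed_no_cycle_coeff_def exp_monomial_coeff_def)
  also have "\<dots> = (-1) ^ m * (real m / fact (Suc m))"
    by (simp add: fact_Suc field_simps del: of_nat_Suc) (simp add: algebra_simps)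
  finally show ?thesis .
qed

lemma abs_signed_no_cycle_coeff_le:
  assumes "2 \<le> d" "2 \<le> n"
  shows "\<bar>signed_no_cycle_coeff d n\<bar> \<le> 1 / (fact (n div d) * real d ^ (n div d))"
proof -
  let ?\<gamma> = "exp_monomial_coeff d ((-1) ^ d / real d)"
  have abs_\<gamma>: "\<bar>?\<gamma> l\<bar> \<le> 1 / (fact (l div d) * real d ^ (l div d))" for l
    by (cases "d dvd l")
      (simp_all add: exp_monomial_coeff_def abs_mult power_abs abs_divide power_divide mult.commute)
  show ?thesis
  proof (cases "d dvd n")
    case True
    have "\<not> d dvd (n - 1)"
    proof
      assume "d dvd n - 1"
      with True have "d dvd n - (n - 1)" by (rule dvd_diff_nat)
      then show False using assms by simp
    qed
    then show ?thesis
      using True assms abs_\<gamma>[of n] by (simp add: signed_no_cycle_coeff_def exp_monomial_coeff_def)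
  next
    case False
    moreover have "(n - 1) div d = n div d"
      using False assms div_Suc[of "n - 1" d] by (simp add: dvd_eq_mod_eq_0)
    ultimately show ?thesis
      using assms abs_\<gamma>[of "n - 1"] by (simp add: signed_no_cycle_coeff_def exp_monomial_coeff_def)
  qed
qed

lemma four_mult_Suc_le_fact_power:
  fixes i d :: nat
  assumes "2 \<le> i" "2 \<le> d"
  shows "4 * (i + 1) * d \<le> 3 * fact i * d ^ i"
  using assms(1)
proof (induction i rule: nat_induct_at_least)
  case base
  show ?case using assms(2) by (simp add: power2_eq_square numeral_2_eq_2)
next
  case (Suc i)
  have "4 * (Suc i + 1) * d \<le> 2 * (4 * (i + 1) * d)" by simp
  also have "\<dots> \<le> 2 * (3 * fact i * d ^ i)" using Suc.IH by (rule mult_le_mono2)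
  also have "\<dots> \<le> ((i + 1) * d) * (3 * fact i * d ^ i)"
  proof (rule mult_right_mono)
    show "2 \<le> (i + 1) * d" using Suc.hyps assms(2) by (metis mult_le_mono one_le_numeral
        add_le_mono le_add2 mult_1 numeral_le_iff)
  qed simp
  also have "\<dots> = 3 * fact (Suc i) * d ^ Suc i" by (simp add: algebra_simps)
  finally show ?case .
qed

lemma abs_signed_no_cycle_coeff_mult_le:
  assumes "2 \<le> d" "2 * d \<le> n"
  shows "\<bar>signed_no_cycle_coeff d n\<bar> * (4 * (real n + 1)) \<le> 3"
proof -
  define i where "i = n div d"
  have i: "2 \<le> i" using assms div_le_mono[of "2 * d" n d] by (simp add: i_def)
  define K where "K = fact i * real d ^ i"
  have K: "0 < K" using assms unfolding K_def by simp
  have "n < i * d + d" using assms div_mult_mod_eq[of n d] mod_less_divisor[of d n] unfolding i_def by linarith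
  then have "4 * (n + 1) \<le> 4 * (i + 1) * d" by (simp add: algebra_simps)
  also have "\<dots> \<le> 3 * fact i * d ^ i" by (rule four_mult_Suc_le_fact_power[OF i assms(1)])
  finally have "real (4 * (n + 1)) \<le> real (3 * fact i * d ^ i)" by (simp only: of_nat_le_iff)
  then have n_K: "4 * (real n + 1) \<le> 3 * K" unfolding K_def by (simp add: of_nat_fact)
  have r_K: "\<bar>signed_no_cycle_coeff d n\<bar> \<le> 1 / K"
    using abs_signed_no_cycle_coeff_le[of d n] assms unfolding K_def i_def by simp
  have "\<bar>signed_no_cycle_coeff d n\<bar> * (4 * (real n + 1)) \<le> 1 / K * (3 * K)"
    by (rule mult_mono[OF r_K n_K]) (use K in simp_all)
  then show ?thesis using K by simp
qed

lemma signed_no_cycle_coeff_one_bounds: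
  assumes "2 \<le> n"
  shows "\<bar>signed_no_cycle_coeff 1 n\<bar> * (real n * (real n - 1))
       \<le> (2 * real n - 2) * exp_partial (- 1) (n - 1) + exp_partial (- 1) (n - 2)"
    and "\<bar>signed_no_cycle_coeff 1 n\<bar> * (real n - 1) \<le> 1"
proof -
  let ?r = "signed_no_cycle_coeff 1 n"
  obtain k where n: "n = Suc (Suc k)" using assms by (metis add_2_eq_Suc le_Suc_ex)
  have r: "\<bar>?r\<bar> = real (Suc k) / fact n" using n signed_no_cycle_coeff_one[of "Suc k"] by (simp add: abs_mult)
  have fact_n: "(fact n :: real) = real n * real (Suc k) * fact k" using n by (simp add: algebra_simps)
  have n_pos: "real n \<noteq> 0" and n_minus_1: "real n - 1 = real (Suc k)" using n by simp_all
  have "real (Suc k) / fact k \<le> (2 * real n - 2) * exp_partial (- 1) (n - 1) + exp_partial (- 1) (n - 2)"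
  proof (cases "k \<le> 1")
    case True
    then have "k = 0 \<or> k = 1" by auto
    then show ?thesis using n by (auto simp: exp_partial_Suc)
  next
    case False
    have E: "1 / 3 \<le> exp_partial (- 1) j" if "2 \<le> j" for j
      using exp_partial_bounds(4)[of "- 1" j] that by (simp add: exp_partial_1_2_3)
    have "(2 :: real) \<le> fact k" using False fact_mono[of 2 k, where 'a = real] by simp
    then have "real (Suc k) / fact k \<le> real (Suc k) / 2" by (intro divide_left_mono) auto
    also have "\<dots> \<le> (2 * real n - 2) * (1 / 3) + 1 / 3" using n by (simp add: field_simps)
    also have "\<dots> \<le> (2 * real n - 2) * exp_partial (- 1) (n - 1) + exp_partial (- 1) (n - 2)"
      using E[of "n - 1"] E[of "n - 2"] n False by (intro add_mono mult_left_mono) auto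
    finally show ?thesis .
  qed
  moreover have "\<bar>?r\<bar> * (real n * (real n - 1)) = real (Suc k) / fact k"
    unfolding r fact_n n_minus_1 using n_pos by (simp add: field_simps del: of_nat_Suc)
  ultimately show "\<bar>?r\<bar> * (real n * (real n - 1))
      \<le> (2 * real n - 2) * exp_partial (- 1) (n - 1) + exp_partial (- 1) (n - 2)"
    by simp
  have "real (Suc k) \<le> real n" using n by simp
  also have "\<dots> \<le> real n * fact k" using mult_left_mono[OF fact_ge_1[of k], of "real n"] by simp
  finally have "real (Suc k) / (real n * fact k) \<le> 1" using n by (simp add: pos_divide_le_eq)
  moreover have "\<bar>?r\<bar> * (real n - 1) = real (Suc k) / (real n * fact k)"
    unfolding r fact_n n_minus_1 using n_pos by (simp add: field_simps del: of_nat_Suc)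
  ultimately show "\<bar>?r\<bar> * (real n - 1) \<le> 1" by simp
qed

lemma signed_no_cycle_coeff_bounds:
  assumes "1 \<le> d" "2 * d \<le> n"
  shows "\<bar>signed_no_cycle_coeff d n\<bar> * (real n * (real n - 1))
       \<le> (2 * real n - real d - 1) * exp_partial (- (1 / real d)) (n div d - 1)
          + exp_partial (- (1 / real d)) (n div d - 2)"
    and "\<bar>signed_no_cycle_coeff d n\<bar> * (real n - 1) \<le> 1"
proof -
  let ?r = "signed_no_cycle_coeff d n" and ?E = "exp_partial (- (1 / real d))"
  have "\<bar>?r\<bar> * (real n * (real n - 1)) \<le> (2 * real n - real d - 1) * ?E (n div d - 1) + ?E (n div d - 2)
      \<and> \<bar>?r\<bar> * (real n - 1) \<le> 1"
  proof (cases "d = 1")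
    case True
    then show ?thesis using signed_no_cycle_coeff_one_bounds[of n] assms by simp
  next
    case False
    then have d: "2 \<le> d" using assms by simp
    have n: "2 \<le> n" using assms by simp
    have r: "\<bar>?r\<bar> \<le> 3 / (4 * (real n + 1))"
      using abs_signed_no_cycle_coeff_mult_le[OF d assms(2)] by (simp add: pos_le_divide_eq)
    have E: "1 / 2 \<le> ?E j" for j
    proof -
      have "1 / real d \<le> 1 / 2" using d by (intro divide_left_mono) auto
      then show ?thesis using exp_partial_minus_inverse_bounds(1)[OF assms(1), of j] by linarith
    qed
    have "\<bar>?r\<bar> * (real n * (real n - 1)) \<le> 3 / (4 * (real n + 1)) * (real n * (real n - 1))"
      using r n by (intro mult_right_mono) auto
    also have "\<dots> = 3 * real n / 4 * ((real n - 1) / (real n + 1))" by (simp add: field_simps)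
    also have "\<dots> \<le> 3 * real n / 4 * 1" by (intro mult_left_mono) auto
    also have "\<dots> \<le> (2 * real n - real d - 1) * (1 / 2) + 1 / 2"
    proof -
      have "2 * real d \<le> real n" using assms by linarith
      then show ?thesis by (simp add: field_simps)
    qed
    also have "\<dots> \<le> (2 * real n - real d - 1) * ?E (n div d - 1) + ?E (n div d - 2)"
      using E assms by (intro add_mono mult_left_mono) auto
    finally have "\<bar>?r\<bar> * (real n * (real n - 1))
        \<le> (2 * real n - real d - 1) * ?E (n div d - 1) + ?E (n div d - 2)" by simp
    moreover have "\<bar>?r\<bar> * (real n - 1) \<le> 1"
    proof -
      have "\<bar>?r\<bar> * (real n - 1) \<le> 3 / (4 * (real n + 1)) * (real n - 1)"
        using r n by (intro mult_right_mono) auto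
      also have "\<dots> \<le> 1" by (simp add: field_simps)
      finally show ?thesis .
    qed
    ultimately show ?thesis by simp
  qed
  then show "\<bar>?r\<bar> * (real n * (real n - 1)) \<le> (2 * real n - real d - 1) * ?E (n div d - 1) + ?E (n div d - 2)"
    and "\<bar>?r\<bar> * (real n - 1) \<le> 1" by simp_all
qed

lemma exp_gap_bounds:
  assumes "1 \<le> d" "2 \<le> i"
  shows "0 < 1 - exp (- 1 / real d) - 2 / (fact (i + 1) * real d ^ (i + 1))"
    and "1 - exp (- 1 / real d) - 2 / (fact (i + 1) * real d ^ (i + 1)) \<le> 1 / real d"
proof -
  have d: "1 \<le> real d" using assms by simp
  have "0 \<le> 2 / (fact (i + 1) * real d ^ (i + 1))" by simp
  moreover have "1 + (- 1 / real d) \<le> exp (- 1 / real d)" by (rule exp_ge_add_one_self)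
  ultimately show "1 - exp (- 1 / real d) - 2 / (fact (i + 1) * real d ^ (i + 1)) \<le> 1 / real d"
    by linarith
  have "exp (- 1 / real d) = 1 / exp (1 / real d)" by (simp add: exp_minus inverse_eq_divide)
  also have "\<dots> \<le> 1 / (1 + 1 / real d)"
    using d exp_ge_add_one_self[of "1 / real d"] by (intro divide_left_mono) (auto intro!: mult_pos_pos add_pos_nonneg)
  also have "\<dots> = real d / (real d + 1)" using d by (simp add: field_simps)
  finally have "1 / (real d + 1) \<le> 1 - exp (- 1 / real d)" using d by (simp add: field_simps)
  moreover have "2 / (fact (i + 1) * real d ^ (i + 1)) < 1 / (real d + 1)"
  proof -
    have "(fact 3 :: real) \<le> fact (i + 1)" using assms by (intro fact_mono) simp
    moreover have "real d ^ 3 \<le> real d ^ (i + 1)" using assms d by (intro power_increasing) auto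
    ultimately have "6 * real d ^ 3 \<le> fact (i + 1) * real d ^ (i + 1)"
      by (intro mult_mono) (auto simp: numeral_3_eq_3)
    then have "2 / (fact (i + 1) * real d ^ (i + 1)) \<le> 2 / (6 * real d ^ 3)"
      using d by (intro divide_left_mono) auto
    also have "\<dots> < 1 / (real d + 1)"
    proof -
      have "real d \<le> real d ^ 3" using d by (metis power_one_right power_increasing one_le_numeral)
      then have "real d + 1 < 3 * real d ^ 3" using d by linarith
      then show ?thesis using d by (simp add: field_simps)
    qed
    finally show ?thesis .
  qed
  ultimately show "0 < 1 - exp (- 1 / real d) - 2 / (fact (i + 1) * real d ^ (i + 1))" by linarith
qed

lemma abs_card_cycA_plus_minus_le:
  assumes "1 \<le> d" "2 * d \<le> n"
  shows "\<bar>real (card (cycA_plus n d)) - real (card (cycA_minus n d))\<bar>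
       \<le> fact n * ((2 * real n - real d - 1) / (real n * (real n - 1)) * (1 - aseq d (n div d - 1))
                   + 1 / (real n * (real n - 1)) * (1 - aseq d (n div d - 2)))"
proof -
  let ?E = "exp_partial (- (1 / real d))"
  have "2 \<le> real n" using assms by linarith
  then have n: "0 < real n * (real n - 1)" by (intro mult_pos_pos) auto
  have "\<bar>real (card (cycA_plus n d)) - real (card (cycA_minus n d))\<bar>
      = fact n * \<bar>signed_no_cycle_coeff d n\<bar>"
    using card_cycA_plus_minus[OF assms(1)] assms by (simp add: abs_mult)
  also have "\<dots> \<le> fact n * (((2 * real n - real d - 1) * ?E (n div d - 1) + ?E (n div d - 2))
                          / (real n * (real n - 1)))"
    using signed_no_cycle_coeff_bounds(1)[OF assms] n by (simp add: pos_le_divide_eq)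
  also have "\<dots> = fact n * ((2 * real n - real d - 1) / (real n * (real n - 1)) * (1 - aseq d (n div d - 1))
                   + 1 / (real n * (real n - 1)) * (1 - aseq d (n div d - 2)))"
    by (simp add: aseq_eq_exp_partial add_divide_distrib)
  finally show ?thesis .
qed

lemma fact_mult_aseq_combination_le:
  assumes "1 \<le> d" "2 * d \<le> n"
  shows "fact n * ((2 * real n - real d - 1) / (real n * (real n - 1)) * (1 - aseq d j)
                   + 1 / (real n * (real n - 1)) * (1 - aseq d j'))
       \<le> fact n * (2 / (real n - 1))"
proof -
  let ?E = "exp_partial (- (1 / real d))"
  have "2 \<le> real n" and c: "0 \<le> 2 * real n - real d - 1" using assms by linarith+
  then have n: "0 < real n * (real n - 1)" by (intro mult_pos_pos) auto
  have "0 \<le> ?E k" "?E k \<le> 1" for k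
    using exp_partial_minus_inverse_bounds[OF assms(1), of k] assms by (auto intro: order_trans[rotated])
  then have "(2 * real n - real d - 1) * ?E j + ?E j' \<le> (2 * real n - real d - 1) * 1 + 1"
    using c by (intro add_mono mult_left_mono) auto
  also have "\<dots> \<le> 2 * real n" using assms by simp
  also have "\<dots> = 2 / (real n - 1) * (real n * (real n - 1))"
    using \<open>2 \<le> real n\<close> by (simp add: field_simps)
  finally have "((2 * real n - real d - 1) * ?E j + ?E j') / (real n * (real n - 1)) \<le> 2 / (real n - 1)"
    using n by (simp add: pos_divide_le_eq)
  then have "fact n * (((2 * real n - real d - 1) * ?E j + ?E j') / (real n * (real n - 1)))
      \<le> fact n * (2 / (real n - 1))"
    by (rule mult_left_mono) simp
  then show ?thesis by (simp add: aseq_eq_exp_partial add_divide_distrib)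
qed

lemma abs_cycA_sign_ratio_le:
  assumes "1 \<le> d" "2 * d \<le> n"
  shows "\<bar>(real (card (cycA_plus n d)) - real (card (cycA_minus n d))) / real (card (cycA n d))\<bar>
       \<le> 1 / (real n - 1) * (2 / (1 - exp (- 1 / real d)
                                 - 2 / (fact (n div d + 1) * real d ^ (n div d + 1))))"
proof -
  define i where "i = n div d"
  define D where "D = 1 - exp (- 1 / real d) - 2 / (fact (i + 1) * real d ^ (i + 1))"
  have i: "2 \<le> i" using assms div_le_mono[of "2 * d" n d] by (simp add: i_def)
  have d: "1 \<le> real d" and n: "0 < real n - 1" using assms by linarith+
  have D: "0 < D" "D \<le> 1 / real d" unfolding D_def using exp_gap_bounds[OF assms(1) i] by auto
  have U: "1 / (2 * real d) \<le> 1 - exp_partial (- (1 / real d)) i"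
    by (rule one_minus_exp_partial_ge[OF assms(1) i])
  moreover have "0 < 1 / (2 * real d)" using d by simp
  ultimately have U_pos: "0 < 1 - exp_partial (- (1 / real d)) i" by linarith
  have "\<bar>(real (card (cycA_plus n d)) - real (card (cycA_minus n d))) / real (card (cycA n d))\<bar>
      = \<bar>signed_no_cycle_coeff d n\<bar> / (1 - exp_partial (- (1 / real d)) i)"
    using card_cycA_plus_minus[OF assms(1)] card_cycA[OF assms(1)] assms U_pos
    by (simp add: i_def abs_mult abs_divide)
  also have "\<dots> \<le> (1 / (real n - 1)) / (1 / (2 * real d))"
  proof (rule frac_le)
    show "\<bar>signed_no_cycle_coeff d n\<bar> \<le> 1 / (real n - 1)"
      using signed_no_cycle_coeff_bounds(2)[OF assms] n by (simp add: pos_le_divide_eq)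
  qed (use n d U in simp_all)
  also have "\<dots> = 1 / (real n - 1) * (2 * real d)" using d by simp
  also have "\<dots> \<le> 1 / (real n - 1) * (2 / D)"
  proof (rule mult_left_mono)
    have "2 * real d = 2 / (1 / real d)" using d by simp
    also have "\<dots> \<le> 2 / D" using D d by (intro divide_left_mono) auto
    finally show "2 * real d \<le> 2 / D" .
  qed (use n in simp)
  finally show ?thesis unfolding D_def i_def .
qed

theorem corollary2p4:
  fixes d n :: nat
  assumes "1 \<le> d" and "2 * d \<le> n"
  defines "i \<equiv> n div d"
  shows "\<bar>real (card (cycA_plus n d)) - real (card (cycA_minus n d))\<bar>
           \<le> fact n * ((2 * real n - real d - 1) / (real n * (real n - 1)) * (1 - aseq d (i - 1))
                        + 1 / (real n * (real n - 1)) * (1 - aseq d (i - 2)))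
    \<and> fact n * ((2 * real n - real d - 1) / (real n * (real n - 1)) * (1 - aseq d (i - 1))
                        + 1 / (real n * (real n - 1)) * (1 - aseq d (i - 2)))
           \<le> fact n * (2 / (real n - 1))
    \<and> \<bar>(real (card (cycA_plus n d)) - real (card (cycA_minus n d))) / real (card (cycA n d))\<bar>
           \<le> 1 / (real n - 1) * (2 / (1 - exp (- 1 / real d) - 2 / (fact (i + 1) * real d ^ (i + 1))))"
  unfolding i_def
  using abs_card_cycA_plus_minus_le[OF assms(1,2)] fact_mult_aseq_combination_le[OF assms(1,2)]
    abs_cycA_sign_ratio_le[OF assms(1,2)]
  by blast

end
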